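(* Assume (SM), (LIP), (POT) and consider the algorithm AILFEM of the context with arbitrary $\lambda_{\mathrm{lin}},\lambda_{\mathrm{alg}}>0$. Define $\tau:=M+3M(L[3M]/\alpha)^{1/2}\ (\ge4M)$. Let $k\in\mathbb{N}_0$ with $0\le k<\underline{k}[\ell]$ and $|||u_\ell^{k,\underline{i}}|||\le\tau$. Then, if $i_{\min}\in\mathbb{N}$ satisfies $q_{\mathrm{alg}}^{i_{\min}}\le1/3$ and $0<\delta<\min\{1/L[5\tau],\,2\alpha/L[2\tau]^2\}$, it holds that $$0\le\Big(\frac1{2\delta}-\frac{L[5\tau]}2\Big)|||u_\ell^{k+1,\underline{i}}-u_\ell^{k,\underline{i}}|||^2\le\mathcal{E}(u_\ell^{k,\underline{i}})-\mathcal{E}(u_\ell^{k+1,\underline{i}})\le\Big(\frac1{\delta(1-q_{\mathrm{alg}}^{i_{\min}})}-\frac\alpha2\Big)|||u_\ell^{k+1,\underline{i}}-u_\ell^{k,\underline{i}}|||^2$$ for all $(\ell,k+1,\underline{i})\in\mathcal{Q}$.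
   Context: Abstract setting. Let $\mathcal{X}$ be a real Hilbert space with scalar product $\langle\!\langle\cdot,\cdot\rangle\!\rangle$ and norm $|||\cdot|||$, with dual space $\mathcal{X}'$ (norm $\|\cdot\|_{\mathcal{X}'}$, duality bracket $\langle\cdot,\cdot\rangle$). Let $\mathcal{A}:\mathcal{X}\to\mathcal{X}'$ be a nonlinear operator and $F\in\mathcal{X}'$ with $\mathcal{A}0\neq F$. Conditions: (SM) there is $\alpha>0$ with $\alpha|||v-w|||^2\le\langle\mathcal{A}v-\mathcal{A}w,v-w\rangle$ for all $v,w\in\mathcal{X}$; (LIP) for every $\vartheta>0$ there is $L[\vartheta]>0$ with $\langle\mathcal{A}v-\mathcal{A}w,\varphi\rangle\le L[\vartheta]\,|||v-w|||\,|||\varphi|||$ for all $v,w,\varphi\in\mathcal{X}$ with $\max\{|||v|||,|||v-w|||\}\le\vartheta$; (POT) there is a Gâteaux differentiable $\mathcal{P}:\mathcal{X}\to\mathbb{R}$ with $\langle\mathcal{A}w,v\rangle=\lim_{t\to0}(\mathcal{P}(w+tv)-\mathcal{P}(w))/t$ for all $v,w$. The energy is $\mathcal{E}(v):=\mathcal{P}(v)-F(v)$. For every closed subspace $\mathcal{Y}\subseteq\mathcal{X}$ there is a unique $u^\star_{\mathcal{Y}}\in\mathcal{Y}$ with $\langle\mathcal{A}u^\star_{\mathcal{Y}},v\rangle=F(v)$ for all $v\in\mathcal{Y}$; $u^\star:=u^\star_{\mathcal{X}}$. Put $M:=\|F-\mathcal{A}0\|_{\mathcal{X}'}/\alpha$.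 Meshes. $\mathcal{T}_0$ is an initial conforming simplicial triangulation; $\mathtt{refine}(\mathcal{T}_H,\mathcal{M}_H)$ is the coarsest newest-vertex-bisection (NVB) refinement of $\mathcal{T}_H$ in which all elements of $\mathcal{M}_H\subseteq\mathcal{T}_H$ are refined; $\mathbb{T}(\mathcal{T}_H)$ is the set of meshes obtained from $\mathcal{T}_H$ by finitely many NVB steps, $\mathbb{T}:=\mathbb{T}(\mathcal{T}_0)$. Each $\mathcal{T}_H\in\mathbb{T}$ is associated with a finite-dimensional subspace $\mathcal{X}_H\subset\mathcal{X}$, nested: $\mathcal{X}_H\subseteq\mathcal{X}_h$ if $\mathcal{T}_h\in\mathbb{T}(\mathcal{T}_H)$. Write $u_H^\star:=u^\star_{\mathcal{X}_H}$. Zarantonello map: for $\delta>0$, $w_H\in\mathcal{X}_H$, $\Phi_H(\delta;w_H)\in\mathcal{X}_H$ is the unique solution of $\langle\!\langle\Phi_H(\delta;w_H),v_H\rangle\!\rangle=\langle\!\langle w_H,v_H\rangle\!\rangle+\delta[F(v_H)-\langle\mathcal{A}w_H,v_H\rangle]$ for all $v_H\in\mathcal{X}_H$. Algebraic solver: there is $0<q_{\mathrm{alg}}<1$ and for each $\mathcal{T}_H$ a map $\Psi_H:\mathcal{X}'\times\mathcal{X}_H\to\mathcal{X}_H$ such that for every $\varphi\in\mathcal{X}'$, with $w_H^\star\in\mathcal{X}_H$ solving $\langle\!\langle w_H^\star,v_H\rangle\!\rangle=\varphi(v_H)$ for all $v_H\in\mathcal{X}_H$, one has $|||w_H^\star-\Psi_H(\varphi;w_H)|||\le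 q_{\mathrm{alg}}|||w_H^\star-w_H|||$ for all $w_H\in\mathcal{X}_H$. One writes $\Psi_H(w_H^\star;\cdot)$ for $\Psi_H(\varphi;\cdot)$. Estimator: for $\mathcal{T}_H\in\mathbb{T}$, $T\in\mathcal{T}_H$, $v_H\in\mathcal{X}_H$ a number $\eta_H(T,v_H)\ge0$ is given; $\eta_H(\mathcal{U},v_H):=(\sum_{T\in\mathcal{U}}\eta_H(T,v_H)^2)^{1/2}$ for $\mathcal{U}\subseteq\mathcal{T}_H$ and $\eta_H(v_H):=\eta_H(\mathcal{T}_H,v_H)$. Index $\ell$ refers to $\mathcal{T}_\ell$, $\mathcal{X}_\ell$, $\Phi_\ell$, $\Psi_\ell$, $\eta_\ell$, $u_\ell^\star$. Algorithm AILFEM. Input: $\mathcal{T}_0$, $0<\theta\le1$, $C_{\mathrm{mark}}\ge1$, $\lambda_{\mathrm{lin}},\lambda_{\mathrm{alg}}>0$, $i_{\min}\in\mathbb{N}$, $\delta>0$, $u_0^{0,0}\in\mathcal{X}_0$ with $|||u_0^{0,0}|||\le2M$; set $u_0^{0,\star}:=u_0^{0,\underline{i}}:=u_0^{0,0}$. For $\ell=0,1,2,\dots$: (I) For $k=1,2,\dots$: set $u_\ell^{k,0}:=u_\ell^{k-1,\underline{i}}$ and $u_\ell^{k,\star}:=\Phi_\ell(\delta;u_\ell^{k-1,\underline{i}})$ (not computed). For $i=1,2,\dots$: compute $u_\ell^{k,i}:=\Psi_\ell(u_\ell^{k,\star};u_\ell^{k,i-1})$ and $\eta_\ell(u_\ell^{k,i})$;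 terminate the $i$-loop with $\underline{i}[\ell,k]:=i$ if $|||u_\ell^{k,i-1}-u_\ell^{k,i}|||\le\lambda_{\mathrm{alg}}[\lambda_{\mathrm{lin}}\eta_\ell(u_\ell^{k,i})+|||u_\ell^{k,i}-u_\ell^{k,0}|||]$ and $i_{\min}\le i$. Write $u_\ell^{k,\underline{i}}:=u_\ell^{k,\underline{i}[\ell,k]}$. Terminate the $k$-loop with $\underline{k}[\ell]:=k$ if $\mathcal{E}(u_\ell^{k,0})-\mathcal{E}(u_\ell^{k,\underline{i}})\le\lambda_{\mathrm{lin}}^2\eta_\ell(u_\ell^{k,\underline{i}})^2$ and $|||u_\ell^{k,\underline{i}}|||\le2M$. (II) Choose $\mathcal{M}_\ell\subseteq\mathcal{T}_\ell$ with $\theta\,\eta_\ell(u_\ell^{\underline{k},\underline{i}})^2\le\eta_\ell(\mathcal{M}_\ell,u_\ell^{\underline{k},\underline{i}})^2$ and $\#\mathcal{M}_\ell\le C_{\mathrm{mark}}\min\{\#\mathcal{U}:\mathcal{U}\subseteq\mathcal{T}_\ell,\ \theta\eta_\ell(u_\ell^{\underline{k},\underline{i}})^2\le\eta_\ell(\mathcal{U},u_\ell^{\underline{k},\underline{i}})^2\}$. (III) $\mathcal{T}_{\ell+1}:=\mathtt{refine}(\mathcal{T}_\ell,\mathcal{M}_\ell)$ and $u_{\ell+1}^{0,0}:=u_{\ell+1}^{0,\underline{i}}:=u_{\ell+1}^{0,\star}:=u_\ell^{\underline{k},\underline{i}}$. Index set: $\mathcal{Q}:=\{(\ell,k,i)\in\mathbb{N}_0^3: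 u_\ell^{k,i}\text{ is used in the algorithm}\}$; $\underline{k}[\ell]:=\sup\{k\in\mathbb{N}:(\ell,k,0)\in\mathcal{Q}\}$, $\underline{i}[\ell,k]:=\sup\{i\in\mathbb{N}:(\ell,k,i)\in\mathcal{Q}\}$; "$(\ell,k,\underline{i})\in\mathcal{Q}$" means $(\ell,k,\underline{i}[\ell,k])\in\mathcal{Q}$. *)

theory Defs
  imports "HOL-Analysis.Analysis"
begin

text \<open>An element of the dual X' is modelled as a
  bounded linear functional 'a => real. The operator A : X -> X' is modelled as
  A :: 'a => 'a => real, where A w v denotes the duality bracket of A w and v.\<close>

definition dual_operator :: "('a::real_normed_vector \<Rightarrow> 'a \<Rightarrow> real) \<Rightarrow> bool" where
  "dual_operator A \<longleftrightarrow> (\<forall>w. bounded_linear (A w))"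

definition SM :: "real \<Rightarrow> ('a::real_normed_vector \<Rightarrow> 'a \<Rightarrow> real) \<Rightarrow> bool" where
  "SM \<alpha> A \<longleftrightarrow> \<alpha> > 0 \<and> (\<forall>v w. \<alpha> * (norm (v - w))\<^sup>2 \<le> A v (v - w) - A w (v - w))"

definition LIP :: "('a::real_normed_vector \<Rightarrow> 'a \<Rightarrow> real) \<Rightarrow> (real \<Rightarrow> real) \<Rightarrow> bool" where
  "LIP A L \<longleftrightarrow> (\<forall>\<theta>>0. L \<theta> > 0 \<and>
     (\<forall>v w \<phi>. max (norm v) (norm (v - w)) \<le> \<theta> \<longrightarrow>
        A v \<phi> - A w \<phi> \<le> L \<theta> * norm (v - w) * norm \<phi>))"

definition POT :: "('a::real_normed_vector \<Rightarrow> 'a \<Rightarrow> real) \<Rightarrow> ('a \<Rightarrow> real) \<Rightarrow> bool" where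
  "POT A P \<longleftrightarrow> (\<forall>v w. ((\<lambda>t. (P (w + t *\<^sub>R v) - P w) / t) \<longlongrightarrow> A w v) (at 0))"

definition energy :: "('a \<Rightarrow> real) \<Rightarrow> ('a \<Rightarrow> real) \<Rightarrow> 'a \<Rightarrow> real" where
  "energy P F v = P v - F v"

definition Mconst :: "real \<Rightarrow> ('a::real_normed_vector \<Rightarrow> 'a \<Rightarrow> real) \<Rightarrow> ('a \<Rightarrow> real) \<Rightarrow> real" where
  "Mconst \<alpha> A F = onorm (\<lambda>v. F v - A 0 v) / \<alpha>"

definition fd_subspace :: "'a::real_vector set \<Rightarrow> bool" where
  "fd_subspace X \<longleftrightarrow> subspace X \<and> (\<exists>B. finite B \<and> X = span B)"

definition riesz_in :: "'a::real_inner set \<Rightarrow> ('a \<Rightarrow> real) \<Rightarrow> 'a \<Rightarrow> bool" where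
  "riesz_in X \<phi> z \<longleftrightarrow> z \<in> X \<and> (\<forall>v\<in>X. inner z v = \<phi> v)"

text \<open>Right-hand side of the Zarantonello step: v |-> <<w,v>> + delta [F v - <A w, v>];
  its Riesz representative in X_l is Phi_l(delta; w).\<close>
definition zar_rhs :: "('a::real_inner \<Rightarrow> 'a \<Rightarrow> real) \<Rightarrow> ('a \<Rightarrow> real) \<Rightarrow> real \<Rightarrow> 'a \<Rightarrow> 'a \<Rightarrow> real" where
  "zar_rhs A F \<delta> w = (\<lambda>v. inner w v + \<delta> * (F v - A w v))"

definition alg_solver :: "'a::real_inner set \<Rightarrow> real \<Rightarrow> (('a \<Rightarrow> real) \<Rightarrow> 'a \<Rightarrow> 'a) \<Rightarrow> bool" where
  "alg_solver X q \<Psi> \<longleftrightarrow> 0 < q \<and> q < 1 \<and>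
     (\<forall>\<phi> w wstar. bounded_linear \<phi> \<longrightarrow> riesz_in X \<phi> wstar \<longrightarrow> w \<in> X \<longrightarrow>
        \<Psi> \<phi> w \<in> X \<and> norm (wstar - \<Psi> \<phi> w) \<le> q * norm (wstar - w))"

text \<open>Final iterate of the k-th linearization step: u_l^{k,ibar}; for k = 0 it is u_l^{0,0}.\<close>
definition Ufin :: "(nat \<Rightarrow> nat \<Rightarrow> 'a) \<Rightarrow> (nat \<Rightarrow> nat) \<Rightarrow> nat \<Rightarrow> 'a" where
  "Ufin u ib k = (if k = 0 then u 0 0 else u k (ib k))"

definition alg_stop :: "('a::real_normed_vector \<Rightarrow> real) \<Rightarrow> real \<Rightarrow> real \<Rightarrow> nat \<Rightarrow> (nat \<Rightarrow> nat \<Rightarrow> 'a) \<Rightarrow> nat \<Rightarrow> nat \<Rightarrow> bool" where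
  "alg_stop \<eta> lamlin lamalg imin u k i \<longleftrightarrow>
     norm (u k (i - 1) - u k i) \<le> lamalg * (lamlin * \<eta> (u k i) + norm (u k i - u k 0)) \<and> imin \<le> i"

definition lin_stop :: "('a::real_normed_vector \<Rightarrow> real) \<Rightarrow> ('a \<Rightarrow> real) \<Rightarrow> real \<Rightarrow> real \<Rightarrow> (nat \<Rightarrow> nat \<Rightarrow> 'a) \<Rightarrow> (nat \<Rightarrow> nat) \<Rightarrow> nat \<Rightarrow> bool" where
  "lin_stop E \<eta> lamlin M u ib k \<longleftrightarrow>
     E (u k 0) - E (Ufin u ib k) \<le> lamlin\<^sup>2 * (\<eta> (Ufin u ib k))\<^sup>2 \<and> norm (Ufin u ib k) \<le> 2 * M"

text \<open>Run of step (I) of AILFEM on a fixed level l (discrete space X, solver Psi, estimator eta),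
  started from u_l^{0,0} = u 0 0, in which the linearization steps 1..K have been carried out,
  each i-loop terminated (at index ib k), and the k-loop has not stopped at any of the
  steps 1..K-1, i.e. (l,K,ibar) is in Q.\<close>
definition ailfem_level_run ::
  "'a::real_inner set \<Rightarrow> (('a \<Rightarrow> real) \<Rightarrow> 'a \<Rightarrow> 'a) \<Rightarrow> ('a \<Rightarrow> real) \<Rightarrow>
   ('a \<Rightarrow> 'a \<Rightarrow> real) \<Rightarrow> ('a \<Rightarrow> real) \<Rightarrow> ('a \<Rightarrow> real) \<Rightarrow> real \<Rightarrow>
   real \<Rightarrow> real \<Rightarrow> nat \<Rightarrow> real \<Rightarrow>
   (nat \<Rightarrow> nat \<Rightarrow> 'a) \<Rightarrow> (nat \<Rightarrow> nat) \<Rightarrow> nat \<Rightarrow> bool" where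
  "ailfem_level_run X \<Psi> \<eta> A F P M lamlin lamalg imin \<delta> u ib K \<longleftrightarrow>
     u 0 0 \<in> X \<and> norm (u 0 0) \<le> 2 * M \<and>
     (\<forall>k\<in>{1..K}.
        u k 0 = Ufin u ib (k - 1) \<and> 1 \<le> ib k \<and>
        (\<forall>i\<in>{1..ib k}. u k i = \<Psi> (zar_rhs A F \<delta> (Ufin u ib (k - 1))) (u k (i - 1))) \<and>
        (\<forall>i\<in>{1..<ib k}. \<not> alg_stop \<eta> lamlin lamalg imin u k i) \<and>
        alg_stop \<eta> lamlin lamalg imin u k (ib k)) \<and>
     (\<forall>k\<in>{1..<K}. \<not> lin_stop (energy P F) \<eta> lamlin M u ib k)"

end

(* Write w for the current iterate, z = Phi(delta; w) for the exact Zarantonello update and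
   w' = w + e for the computed one. Testing the defining equation of z with e shows that the
   energy along the segment from w to w' starts with slope -<<z - w, e>>/delta; (SM) and (LIP)
   bound the growth of the slope from below by alpha |e|^2 t and from above by L |e|^2 t.
   The algebraic solver leaves the relative error |z - w'| <= Q |z - w| with Q = q^imin <= 1/3,
   which gives |e|^2/2 <= <<z - w, e>> <= |e|^2/(1 - Q). The restriction on delta bounds
   |z - w| by 3 tau and hence |e| by 4 tau, so the segment stays in the ball of radius 5 tau. *)

theory Submission
  imports Defs
begin

lemma riesz_representation_finite_span:
  fixes B :: "'a::real_inner set"
  assumes "finite B" "linear \<phi>"
  shows "\<exists>z\<in>span B. \<forall>v\<in>span B. inner z v = \<phi> v"
  using assms
proof (induction B arbitrary: \<phi> rule: finite_induct)
  case empty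
  then show ?case by (auto simp: linear_0)
next
  case (insert b B)
  obtain z0 where z0: "z0 \<in> span B" "\<forall>v\<in>span B. inner z0 v = \<phi> v"
    using insert.IH insert.prems by blast
  have "linear (inner b)" by (simp add: linearI inner_add_right)
  then obtain p where p: "p \<in> span B" "\<forall>v\<in>span B. inner p v = inner b v"
    using insert.IH by blast
  \<comment> \<open>\<open>p\<close> is the projection of \<open>b\<close> onto \<open>span B\<close>; the representative is corrected along \<open>c = b - p\<close>.\<close>
  define c where "c = b - p"
  have c_orth: "inner c v = 0" if "v \<in> span B" for v
    using p that by (simp add: c_def inner_diff_left)
  define \<beta> where "\<beta> = \<phi> c / inner c c"
  have \<beta>: "\<beta> * inner c c = \<phi> c"
    using insert.prems by (cases "c = 0") (simp_all add: \<beta>_def linear_0)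
  define z where "z = z0 + \<beta> *\<^sub>R c"
  have "c \<in> span (insert b B)"
    unfolding c_def by (meson insert_iff span_base span_diff span_mono subset_insertI subsetD p(1))
  then have "z \<in> span (insert b B)"
    unfolding z_def using z0(1) by (meson span_add span_mono span_scale subset_insertI subsetD)
  moreover have "inner z v = \<phi> v" if v: "v \<in> span (insert b B)" for v
  proof -
    obtain s where s: "v - s *\<^sub>R b \<in> span B" using v span_breakdown_eq by blast
    define x where "x = v - s *\<^sub>R b + s *\<^sub>R p"
    have x: "x \<in> span B" unfolding x_def using s p(1) by (simp add: span_add span_scale)
    have v_eq: "v = x + s *\<^sub>R c" by (simp add: x_def c_def algebra_simps)
    have "inner z v = inner z0 x + s * inner z0 c + \<beta> * inner c x + \<beta> * s * inner c c"
      by (simp add: z_def v_eq inner_add_left inner_add_right algebra_simps)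
    also have "\<dots> = \<phi> x + s * \<phi> c"
      using z0 c_orth[OF x] c_orth[OF z0(1)] x \<beta> by (simp add: inner_commute)
    also have "\<dots> = \<phi> v" using insert.prems by (simp add: v_eq linear_add linear_scale)
    finally show ?thesis .
  qed
  ultimately show ?case by blast
qed

lemma fd_subspace_riesz_in_exists:
  assumes "fd_subspace X" "linear \<phi>"
  shows "\<exists>z. riesz_in X \<phi> z"
  using assms riesz_representation_finite_span unfolding fd_subspace_def riesz_in_def by blast

lemma bounded_linear_zar_rhs:
  assumes "dual_operator A" "bounded_linear F"
  shows "bounded_linear (zar_rhs A F \<delta> w)"
  using assms unfolding zar_rhs_def dual_operator_def
  by (intro bounded_linear_add bounded_linear_inner_right
      bounded_linear_compose[OF bounded_linear_mult_right] bounded_linear_sub) auto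

lemma riesz_in_zar_rhs_inner:
  assumes "riesz_in X (zar_rhs A F \<delta> w) z" "v \<in> X"
  shows "inner (z - w) v = \<delta> * (F v - A w v)"
  using assms unfolding riesz_in_def zar_rhs_def by (simp add: inner_diff_left)

lemma alg_solver_iterates:
  assumes solver: "alg_solver X q \<Psi>" and "bounded_linear \<phi>" "riesz_in X \<phi> z"
    and "v 0 \<in> X" and iter: "\<And>i. i < n \<Longrightarrow> v (Suc i) = \<Psi> \<phi> (v i)" and "i \<le> n"
  shows "v i \<in> X \<and> norm (z - v i) \<le> q ^ i * norm (z - v 0)"
  using \<open>i \<le> n\<close>
proof (induction i)
  case 0
  show ?case using \<open>v 0 \<in> X\<close> by simp
next
  case (Suc i)
  then have IH: "v i \<in> X" "norm (z - v i) \<le> q ^ i * norm (z - v 0)" by simp_all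
  have "q > 0" using solver by (simp add: alg_solver_def)
  have "v (Suc i) \<in> X \<and> norm (z - v (Suc i)) \<le> q * norm (z - v i)"
    using solver assms(2,3) IH(1) iter[of i] Suc.prems unfolding alg_solver_def by simp
  moreover have "q * norm (z - v i) \<le> q * (q ^ i * norm (z - v 0))"
    using IH(2) \<open>q > 0\<close> by simp
  ultimately show ?case by simp
qed

lemma ailfem_level_run_step_contraction:
  assumes run: "ailfem_level_run X \<Psi> \<eta> A F P M lamlin lamalg imin \<delta> u ib K"
    and solver: "alg_solver X q \<Psi>" and "dual_operator A" "bounded_linear F"
    and z: "riesz_in X (zar_rhs A F \<delta> (Ufin u ib k)) z" and "Ufin u ib k \<in> X" "Suc k \<le> K"
  shows "Ufin u ib (Suc k) \<in> X \<and> norm (z - Ufin u ib (Suc k)) \<le> q ^ imin * norm (z - Ufin u ib k)"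
proof -
  let ?v = "u (Suc k)" and ?n = "ib (Suc k)"
  have "Suc k \<in> {1..K}" using \<open>Suc k \<le> K\<close> by simp
  then have start: "?v 0 = Ufin u ib k"
    and iter: "\<And>i. i < ?n \<Longrightarrow> ?v (Suc i) = \<Psi> (zar_rhs A F \<delta> (Ufin u ib k)) (?v i)"
    and "imin \<le> ?n"
    using run unfolding ailfem_level_run_def alg_stop_def by auto
  have "?v ?n \<in> X \<and> norm (z - ?v ?n) \<le> q ^ ?n * norm (z - ?v 0)"
    using alg_solver_iterates[OF solver bounded_linear_zar_rhs[OF assms(3,4)] z, of ?v ?n ?n]
      start iter \<open>Ufin u ib k \<in> X\<close> by simp
  moreover have "q ^ ?n \<le> q ^ imin"
    using solver \<open>imin \<le> ?n\<close> by (simp add: alg_solver_def power_decreasing)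
  moreover have "Ufin u ib (Suc k) = ?v ?n" by (simp add: Ufin_def)
  ultimately show ?thesis
    using start by (metis mult_right_mono norm_ge_zero order_trans)
qed

lemma ailfem_level_run_Ufin_in:
  assumes run: "ailfem_level_run X \<Psi> \<eta> A F P M lamlin lamalg imin \<delta> u ib K"
    and "fd_subspace X" "alg_solver X q \<Psi>" "dual_operator A" "bounded_linear F" "j \<le> K"
  shows "Ufin u ib j \<in> X"
  using \<open>j \<le> K\<close>
proof (induction j)
  case 0
  show ?case using run by (simp add: ailfem_level_run_def Ufin_def)
next
  case (Suc j)
  obtain z where "riesz_in X (zar_rhs A F \<delta> (Ufin u ib j)) z"
    using fd_subspace_riesz_in_exists assms(2) bounded_linear_zar_rhs[OF assms(4,5)]
      bounded_linear.linear by blast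
  then show ?case
    using ailfem_level_run_step_contraction[OF run assms(3-5)] Suc by simp
qed

lemma increment_ge_of_derivative_growth:
  fixes g D :: "real \<Rightarrow> real"
  assumes "\<And>t. t \<in> {0..1} \<Longrightarrow> (g has_real_derivative D t) (at t)"
    and "\<And>t. t \<in> {0..1} \<Longrightarrow> c * t \<le> D t - D 0"
  shows "D 0 + c / 2 \<le> g 1 - g 0"
proof -
  define h where "h = (\<lambda>t. g t - t * D 0 - c * t\<^sup>2 / 2)"
  have "h 0 \<le> h 1"
  proof (rule deriv_nonneg_imp_mono[where g = h and a = 0 and b = 1 and g' = "\<lambda>t. D t - D 0 - c * t"])
    fix t :: real
    assume t: "t \<in> {0..1}"
    have "((\<lambda>t. g t - t * D 0 - c * t\<^sup>2 / 2) has_real_derivative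
        D t - 1 * D 0 - c * (of_nat 2 * t ^ (2 - 1)) / 2) (at t)"
      by (intro DERIV_diff DERIV_cmult_right DERIV_cdivide DERIV_cmult assms(1)[OF t] DERIV_ident)
        (use DERIV_pow[of 2 t UNIV] in simp)
    then show "(h has_real_derivative D t - D 0 - c * t) (at t)"
      unfolding h_def by simp
    show "0 \<le> D t - D 0 - c * t" using assms(2)[OF t] by simp
  qed simp
  then show ?thesis by (simp add: h_def)
qed

lemma increment_le_of_derivative_growth:
  fixes g D :: "real \<Rightarrow> real"
  assumes "\<And>t. t \<in> {0..1} \<Longrightarrow> (g has_real_derivative D t) (at t)"
    and "\<And>t. t \<in> {0..1} \<Longrightarrow> D t - D 0 \<le> c * t"
  shows "g 1 - g 0 \<le> D 0 + c / 2"
proof -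
  have "- D 0 + - c / 2 \<le> - g 1 - - g 0"
  proof (rule increment_ge_of_derivative_growth)
    show "((\<lambda>t. - g t) has_real_derivative - D t) (at t)" if "t \<in> {0..1}" for t
      using assms(1)[OF that] by (rule DERIV_minus)
    show "- c * t \<le> - D t - - D 0" if "t \<in> {0..1}" for t
      using assms(2)[OF that] by simp
  qed
  then show ?thesis by simp
qed

lemma energy_has_real_derivative_along_line:
  assumes "POT A P" "bounded_linear F"
  shows "((\<lambda>t. energy P F (w + t *\<^sub>R e)) has_real_derivative A (w + t *\<^sub>R e) e - F e) (at t)"
proof -
  interpret F: bounded_linear F by fact
  let ?x = "w + t *\<^sub>R e"
  have "((\<lambda>h. (P (?x + h *\<^sub>R e) - P ?x) / h - F e) \<longlongrightarrow> A ?x e - F e) (at 0)"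
    using assms(1) unfolding POT_def by (intro tendsto_intros) blast
  moreover have "\<forall>\<^sub>F h in at 0. (P (?x + h *\<^sub>R e) - P ?x) / h - F e =
      (energy P F (w + (t + h) *\<^sub>R e) - energy P F ?x) / h"
    unfolding eventually_at_filter
    by (intro always_eventually allI impI)
      (simp add: energy_def F.add F.scale scaleR_add_left field_simps)
  ultimately have "((\<lambda>h. (energy P F (w + (t + h) *\<^sub>R e) - energy P F ?x) / h) \<longlongrightarrow> A ?x e - F e) (at 0)"
    by (rule Lim_transform_eventually)
  then show ?thesis unfolding DERIV_def by simp
qed

lemma energy_decrease_bounds:
  assumes "dual_operator A" "bounded_linear F" "SM \<alpha> A" "LIP A L" "POT A P"
    and "\<theta> > 0" "norm w + norm e \<le> \<theta>"
  shows "F e - A w e - L \<theta> / 2 * (norm e)\<^sup>2 \<le> energy P F w - energy P F (w + e)"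
    and "energy P F w - energy P F (w + e) \<le> F e - A w e - \<alpha> / 2 * (norm e)\<^sup>2"
proof -
  define g where "g t = energy P F (w + t *\<^sub>R e)" for t
  define D where "D t = A (w + t *\<^sub>R e) e - F e" for t
  have g': "(g has_real_derivative D t) (at t)" for t
    unfolding g_def D_def by (rule energy_has_real_derivative_along_line[OF assms(5,2)])
  have A_scale: "A x (t *\<^sub>R e) = t * A x e" for x t
    using assms(1) unfolding dual_operator_def by (metis bounded_linear.linear linear_scale real_scaleR_def)
  have "\<alpha> * (norm e)\<^sup>2 * t \<le> D t - D 0" if t: "t \<in> {0..1}" for t
  proof (cases "t = 0")
    case False
    have "\<alpha> * (norm (t *\<^sub>R e))\<^sup>2 \<le> A (w + t *\<^sub>R e) (t *\<^sub>R e) - A w (t *\<^sub>R e)"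
      using assms(3) unfolding SM_def by (metis add_diff_cancel_left')
    then have "t * (\<alpha> * (norm e)\<^sup>2 * t) \<le> t * (D t - D 0)"
      using t by (simp add: D_def A_scale power2_eq_square algebra_simps)
    then show ?thesis using t False by simp
  qed simp
  then have lower: "D 0 + \<alpha> * (norm e)\<^sup>2 / 2 \<le> g 1 - g 0"
    using increment_ge_of_derivative_growth[OF g'] by simp
  have "D t - D 0 \<le> L \<theta> * (norm e)\<^sup>2 * t" if t: "t \<in> {0..1}" for t
  proof -
    have "norm (t *\<^sub>R e) \<le> norm e" using t by (simp add: mult_left_le_one_le)
    moreover have "norm (w + t *\<^sub>R e) \<le> norm w + norm (t *\<^sub>R e)" by (rule norm_triangle_ineq)
    ultimately have "max (norm (w + t *\<^sub>R e)) (norm (w + t *\<^sub>R e - w)) \<le> \<theta>"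
      using assms(7) norm_ge_zero[of w] by (simp only: add_diff_cancel_left' max.bounded_iff) linarith
    then have "A (w + t *\<^sub>R e) e - A w e \<le> L \<theta> * norm (t *\<^sub>R e) * norm e"
      using assms(4,6) unfolding LIP_def by (metis add_diff_cancel_left')
    then show ?thesis using t by (simp add: D_def power2_eq_square algebra_simps)
  qed
  then have upper: "g 1 - g 0 \<le> D 0 + L \<theta> * (norm e)\<^sup>2 / 2"
    using increment_le_of_derivative_growth[OF g'] by simp
  have "g 0 = energy P F w" "g 1 = energy P F (w + e)" by (simp_all add: g_def)
  then show "F e - A w e - L \<theta> / 2 * (norm e)\<^sup>2 \<le> energy P F w - energy P F (w + e)"
    and "energy P F w - energy P F (w + e) \<le> F e - A w e - \<alpha> / 2 * (norm e)\<^sup>2"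
    using lower upper by (simp_all add: D_def)
qed

lemma inner_bounds_of_relative_error:
  fixes a e :: "'a::real_inner"
  assumes "norm (a - e) \<le> Q * norm a" "0 \<le> Q" "Q < 1"
  shows "(norm e)\<^sup>2 / 2 \<le> inner a e" and "inner a e \<le> (norm e)\<^sup>2 / (1 - Q)"
proof -
  have "norm (a - e) \<le> norm a"
    using assms mult_left_le_one_le[of "norm a" Q] by simp
  then show "(norm e)\<^sup>2 / 2 \<le> inner a e"
    using power_mono[of "norm (a - e)" "norm a" 2] by (simp add: dot_norm_neg)
  have "norm a \<le> norm e + norm (a - e)" by (metis diff_add_cancel norm_triangle_ineq add.commute)
  then have "(1 - Q) * norm a \<le> norm e" using assms(1) by (simp add: algebra_simps)
  then have "norm a \<le> norm e / (1 - Q)" using assms(3) by (simp add: field_simps)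
  then have "norm a * norm e \<le> norm e / (1 - Q) * norm e" by (rule mult_right_mono) simp
  then show "inner a e \<le> (norm e)\<^sup>2 / (1 - Q)"
    using norm_cauchy_schwarz[of a e] by (simp add: power2_eq_square)
qed

lemma Mconst_pos:
  assumes "dual_operator A" "bounded_linear F" "A 0 \<noteq> F" "\<alpha> > 0"
  shows "Mconst \<alpha> A F > 0"
proof -
  have "bounded_linear (\<lambda>v. F v - A 0 v)"
    using assms(1,2) unfolding dual_operator_def by (intro bounded_linear_sub) auto
  moreover have "\<not> (\<forall>v. F v - A 0 v = 0)" using assms(3) by auto
  ultimately have "0 < onorm (\<lambda>v. F v - A 0 v)" using onorm_pos_lt by blast
  then show ?thesis using assms(4) by (simp add: Mconst_def)
qed

lemma SM_const_le_LIP_const: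
  fixes A :: "'a::real_normed_vector \<Rightarrow> 'a \<Rightarrow> real" and x :: 'a
  assumes "SM \<alpha> A" "LIP A L" "\<theta> > 0" "x \<noteq> 0"
  shows "\<alpha> \<le> L \<theta>"
proof -
  define v where "v = (\<theta> / norm x) *\<^sub>R x"
  have "norm v = \<theta>" using assms(3,4) by (simp add: v_def)
  have "\<alpha> * (norm v)\<^sup>2 \<le> A v v - A 0 v" using assms(1) unfolding SM_def by (metis diff_zero)
  also have "\<dots> \<le> L \<theta> * norm v * norm v"
    using assms(2,3) \<open>norm v = \<theta>\<close> unfolding LIP_def by (metis diff_zero max.idem order_refl)
  finally show ?thesis using \<open>norm v = \<theta>\<close> assms(3) by (simp add: power2_eq_square)
qed

lemma zarantonello_increment_norm_le:
  assumes "subspace X" "w \<in> X" and z: "riesz_in X (zar_rhs A F \<delta> w) z"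
    and "dual_operator A" "bounded_linear F" "LIP A L"
    and "0 \<le> \<delta>" "\<theta> > 0" "norm w \<le> \<theta>"
  shows "norm (z - w) \<le> \<delta> * onorm (\<lambda>v. F v - A 0 v) + \<delta> * L \<theta> * norm w"
proof -
  define a where "a = z - w"
  have A_lin: "bounded_linear (A x)" for x using assms(4) by (simp add: dual_operator_def)
  have FA0: "bounded_linear (\<lambda>v. F v - A 0 v)" by (intro bounded_linear_sub assms(5) A_lin)
  have "a \<in> X" using z assms(1,2) unfolding a_def riesz_in_def by (simp add: subspace_diff)
  have "(norm a)\<^sup>2 = \<delta> * ((F a - A 0 a) + (A 0 a - A w a))"
    using riesz_in_zar_rhs_inner[OF z \<open>a \<in> X\<close>] by (simp add: a_def power2_norm_eq_inner)
  also have "\<dots> \<le> \<delta> * (onorm (\<lambda>v. F v - A 0 v) * norm a + L \<theta> * norm w * norm a)"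
  proof (intro mult_left_mono add_mono)
    show "F a - A 0 a \<le> onorm (\<lambda>v. F v - A 0 v) * norm a" using onorm[OF FA0, of a] by simp
    have "A w (- a) - A 0 (- a) \<le> L \<theta> * norm w * norm a"
      using assms(6,8,9) unfolding LIP_def by (metis diff_zero max.idem norm_minus_cancel)
    then show "A 0 a - A w a \<le> L \<theta> * norm w * norm a"
      using A_lin by (simp add: bounded_linear.linear linear_neg)
  qed (rule \<open>0 \<le> \<delta>\<close>)
  finally have "norm a * norm a \<le> norm a * (\<delta> * onorm (\<lambda>v. F v - A 0 v) + \<delta> * L \<theta> * norm w)"
    by (simp add: power2_eq_square algebra_simps)
  moreover have "0 \<le> \<delta> * onorm (\<lambda>v. F v - A 0 v) + \<delta> * L \<theta> * norm w"
  proof -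
    have "L \<theta> > 0" using assms(6,8) unfolding LIP_def by blast
    then show ?thesis using assms(7) onorm_pos_le[OF FA0] by simp
  qed
  ultimately show ?thesis unfolding a_def
    by (cases "norm (z - w) = 0") (auto simp: mult_le_cancel_left)
qed

lemma inexact_zarantonello_step_energy_bounds:
  fixes A :: "'a::real_inner \<Rightarrow> 'a \<Rightarrow> real"
  assumes op: "dual_operator A" "bounded_linear F" "SM \<alpha> A" "LIP A L" "POT A P"
    and "subspace X" and z: "riesz_in X (zar_rhs A F \<delta> w) z" and "w \<in> X" "w' \<in> X"
    and contr: "norm (z - w') \<le> Q * norm (z - w)" and "0 \<le> Q" "Q \<le> 1 / 3"
    and "0 < \<tau>" "norm w \<le> \<tau>" "Mconst \<alpha> A F \<le> \<tau>"
    and "0 < \<delta>" "\<delta> * \<alpha> \<le> 1" "\<delta> * L (2 * \<tau>) \<le> 2" "\<delta> * L (5 * \<tau>) \<le> 1"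
  shows "0 \<le> (1 / (2 * \<delta>) - L (5 * \<tau>) / 2) * (norm (w' - w))\<^sup>2"
    and "(1 / (2 * \<delta>) - L (5 * \<tau>) / 2) * (norm (w' - w))\<^sup>2 \<le> energy P F w - energy P F w'"
    and "energy P F w - energy P F w' \<le> (1 / (\<delta> * (1 - Q)) - \<alpha> / 2) * (norm (w' - w))\<^sup>2"
proof -
  define a e where "a = z - w" and "e = w' - w"
  have "\<alpha> > 0" using op(3) by (simp add: SM_def)
  have "e \<in> X" using assms(6,8,9) by (simp add: e_def subspace_diff)
  have ae: "norm (a - e) \<le> Q * norm a" using contr by (simp add: a_def e_def)
  have "0 \<le> Mconst \<alpha> A F"
    using op(1,2) \<open>\<alpha> > 0\<close> unfolding Mconst_def dual_operator_def
    by (simp add: onorm_pos_le bounded_linear_sub)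
  have "norm a \<le> \<delta> * \<alpha> * Mconst \<alpha> A F + \<delta> * L (2 * \<tau>) * norm w"
    using zarantonello_increment_norm_le[OF assms(6,8) z op(1,2,4), of "2 * \<tau>"] assms(13,14,16)
      \<open>\<alpha> > 0\<close> by (simp add: a_def Mconst_def)
  also have "\<dots> \<le> 1 * Mconst \<alpha> A F + 2 * norm w"
    using assms(17,18) \<open>0 \<le> Mconst \<alpha> A F\<close>
    by (intro add_mono mult_right_mono) simp_all
  finally have "norm a \<le> 3 * \<tau>" using assms(14,15) by linarith
  moreover have "norm e \<le> norm a + norm (a - e)" by (metis norm_triangle_sub norm_minus_commute)
  ultimately have in_ball: "norm w + norm e \<le> 5 * \<tau>"
    using ae assms(14) mult_right_mono[OF assms(12) norm_ge_zero[of a]] by linarith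
  have "0 < 5 * \<tau>" using assms(13) by simp
  note energy = energy_decrease_bounds[OF op this in_ball]
  have Fe: "F e - A w e = inner a e / \<delta>"
    using riesz_in_zar_rhs_inner[OF z \<open>e \<in> X\<close>] assms(16) by (simp add: a_def)
  have "w + e = w'" "norm e = norm (w' - w)" by (simp_all add: e_def)
  have "Q < 1" using assms(12) by simp
  note inner_bounds = inner_bounds_of_relative_error[OF ae assms(11) this]
  have "(norm e)\<^sup>2 / (2 * \<delta>) \<le> inner a e / \<delta>"
    using divide_right_mono[OF inner_bounds(1), of \<delta>] assms(16) by simp
  moreover have "inner a e / \<delta> \<le> (norm e)\<^sup>2 / (\<delta> * (1 - Q))"
    using divide_right_mono[OF inner_bounds(2), of \<delta>] assms(16) by (simp add: mult.commute)
  ultimately show "(1 / (2 * \<delta>) - L (5 * \<tau>) / 2) * (norm (w' - w))\<^sup>2 \<le> energy P F w - energy P F w'"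
    and "energy P F w - energy P F w' \<le> (1 / (\<delta> * (1 - Q)) - \<alpha> / 2) * (norm (w' - w))\<^sup>2"
    using energy \<open>w + e = w'\<close> \<open>norm e = norm (w' - w)\<close> Fe
    by (simp_all add: left_diff_distrib)
  have "L (5 * \<tau>) \<le> 1 / \<delta>" using assms(16,19) by (simp add: field_simps)
  then show "0 \<le> (1 / (2 * \<delta>) - L (5 * \<tau>) / 2) * (norm (w' - w))\<^sup>2" by simp
qed

lemma step_size_bounds:
  fixes \<alpha> L\<^sub>2 L\<^sub>5 \<delta> :: real
  assumes "0 < \<alpha>" "\<alpha> \<le> L\<^sub>2" "\<alpha> \<le> L\<^sub>5" "0 < \<delta>" "\<delta> < min (1 / L\<^sub>5) (2 * \<alpha> / L\<^sub>2\<^sup>2)"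
  shows "\<delta> * \<alpha> \<le> 1" "\<delta> * L\<^sub>2 \<le> 2" "\<delta> * L\<^sub>5 \<le> 1"
proof -
  show "\<delta> * L\<^sub>5 \<le> 1" using assms by (simp add: field_simps)
  then show "\<delta> * \<alpha> \<le> 1" using assms(3,4) by (smt (verit) mult_left_mono)
  have "\<delta> * L\<^sub>2 * L\<^sub>2 < 2 * \<alpha>" using assms by (simp add: field_simps power2_eq_square)
  also have "\<dots> \<le> 2 * L\<^sub>2" using assms(2) by simp
  finally show "\<delta> * L\<^sub>2 \<le> 2" using assms(1,2) by simp
qed

theorem lemma7:
  fixes A :: "'a::{real_inner, complete_space} \<Rightarrow> 'a \<Rightarrow> real"
    and F :: "'a \<Rightarrow> real" and P :: "'a \<Rightarrow> real"
    and \<alpha> :: real and L :: "real \<Rightarrow> real"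
    and X :: "'a set" and \<Psi> :: "('a \<Rightarrow> real) \<Rightarrow> 'a \<Rightarrow> 'a" and qalg :: real
    and \<eta> :: "'a \<Rightarrow> real"
    and lamlin lamalg \<delta> :: real and imin :: nat
    and u :: "nat \<Rightarrow> nat \<Rightarrow> 'a" and ib :: "nat \<Rightarrow> nat" and k :: nat
  assumes dual: "dual_operator A" and F_lin: "bounded_linear F"
    and A0F: "A 0 \<noteq> F"
    and sm: "SM \<alpha> A" and lip: "LIP A L" and pot: "POT A P"
    and Xl: "fd_subspace X"
    and solver: "alg_solver X qalg \<Psi>"
    and eta_nonneg: "\<forall>v. 0 \<le> \<eta> v"
    and lam: "lamlin > 0" "lamalg > 0"
    and imin: "1 \<le> imin"
    and run: "ailfem_level_run X \<Psi> \<eta> A F P (Mconst \<alpha> A F) lamlin lamalg imin \<delta> u ib (k + 1)"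
    and bound: "norm (Ufin u ib k) \<le> Mconst \<alpha> A F + 3 * Mconst \<alpha> A F * sqrt (L (3 * Mconst \<alpha> A F) / \<alpha>)"
    and qmin: "qalg ^ imin \<le> 1 / 3"
    and delta: "0 < \<delta>"
      "\<delta> < min (1 / L (5 * (Mconst \<alpha> A F + 3 * Mconst \<alpha> A F * sqrt (L (3 * Mconst \<alpha> A F) / \<alpha>))))
                (2 * \<alpha> / (L (2 * (Mconst \<alpha> A F + 3 * Mconst \<alpha> A F * sqrt (L (3 * Mconst \<alpha> A F) / \<alpha>))))\<^sup>2)"
  shows "let \<tau> = Mconst \<alpha> A F + 3 * Mconst \<alpha> A F * sqrt (L (3 * Mconst \<alpha> A F) / \<alpha>);
             d = norm (Ufin u ib (k + 1) - Ufin u ib k);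
             dE = energy P F (Ufin u ib k) - energy P F (Ufin u ib (k + 1))
         in 0 \<le> (1 / (2 * \<delta>) - L (5 * \<tau>) / 2) * d\<^sup>2
          \<and> (1 / (2 * \<delta>) - L (5 * \<tau>) / 2) * d\<^sup>2 \<le> dE
          \<and> dE \<le> (1 / (\<delta> * (1 - qalg ^ imin)) - \<alpha> / 2) * d\<^sup>2"
proof -
  define M where "M = Mconst \<alpha> A F"
  define \<tau> where "\<tau> = M + 3 * M * sqrt (L (3 * M) / \<alpha>)"
  have "\<alpha> > 0" using sm by (simp add: SM_def)
  have "M > 0" using Mconst_pos[OF dual F_lin A0F \<open>\<alpha> > 0\<close>] by (simp add: M_def)
  moreover have "L (3 * M) > 0" using lip \<open>M > 0\<close> by (simp add: LIP_def)
  ultimately have "M \<le> \<tau>" "0 < \<tau>" using \<open>\<alpha> > 0\<close> by (simp_all add: \<tau>_def add_pos_nonneg)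
  obtain x :: 'a where "x \<noteq> 0"
    using A0F dual F_lin unfolding dual_operator_def by (metis bounded_linear.linear linear_0 ext)
  then have "\<alpha> \<le> L (2 * \<tau>)" "\<alpha> \<le> L (5 * \<tau>)"
    using SM_const_le_LIP_const[OF sm lip] \<open>0 < \<tau>\<close> by simp_all
  note step_size = step_size_bounds[OF \<open>\<alpha> > 0\<close> this delta(1) delta(2)[folded M_def, folded \<tau>_def]]
  have w: "Ufin u ib k \<in> X" using ailfem_level_run_Ufin_in[OF run Xl solver dual F_lin] by simp
  obtain z where z: "riesz_in X (zar_rhs A F \<delta> (Ufin u ib k)) z"
    using fd_subspace_riesz_in_exists[OF Xl] bounded_linear_zar_rhs[OF dual F_lin]
      bounded_linear.linear by blast
  have w': "Ufin u ib (k + 1) \<in> X"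
    and contr: "norm (z - Ufin u ib (k + 1)) \<le> qalg ^ imin * norm (z - Ufin u ib k)"
    using ailfem_level_run_step_contraction[OF run solver dual F_lin z w] by simp_all
  have "0 \<le> qalg ^ imin" using solver by (simp add: alg_solver_def)
  have "subspace X" using Xl by (simp add: fd_subspace_def)
  have "norm (Ufin u ib k) \<le> \<tau>" "Mconst \<alpha> A F \<le> \<tau>"
    using bound \<open>M \<le> \<tau>\<close> by (simp_all add: \<tau>_def M_def)
  from inexact_zarantonello_step_energy_bounds[OF dual F_lin sm lip pot \<open>subspace X\<close> z w w' contr
      \<open>0 \<le> qalg ^ imin\<close> qmin \<open>0 < \<tau>\<close> this delta(1) step_size]
  show ?thesis unfolding Let_def M_def[symmetric] \<tau>_def[symmetric] by blast
qed

end
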